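(* Let $N\ge3$, let $f_1,\dots,f_N$ be coordinates with Poisson brackets $\{f_m,f_n\}=-\delta_{m+1,n}+\delta_{m-1,n}$ (indices mod $N$), and let $\beta_1,\dots,\beta_{N-2}$ be constants. For $m=1,\dots,N-2$ let $F_m(\lambda)=\prod_{n=m}^{N-2}\bigl(1+(\lambda+\beta_n)\frac{\partial^2}{\partial f_n\partial f_{n+1}}\bigr)(f_m\cdots f_{N-1})$ and $F_{N-1}(\lambda)=f_{N-1}$. Then for each $n=0,1,\dots,N-3$ and independent parameters $\lambda,\mu$, $$\{F_{n+1}(\lambda),F_{n+1}(\mu)\}=\{F_{n+2}(\lambda),F_{n+2}(\mu)\}=0,\qquad \{F_{n+1}(\lambda),F_{n+2}(\mu)\}=\frac{F_{n+2}(\lambda)F_{n+1}(\mu)-F_{n+1}(\lambda)F_{n+2}(\mu)}{\lambda-\mu}.$$ In particular $B(\lambda)=F_1(\lambda)$ and $\tilde A(\lambda)=F_2(\lambda)$ satisfy $\{\tilde A(\lambda),\tilde A(\mu)\}=\{B(\lambda),B(\mu)\}=0$ and $\{\tilde A(\lambda),B(\mu)\}=\frac{B(\lambda)\tilde A(\mu)-\tilde A(\lambda)B(\mu)}{\lambda-\mu}$.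
   Context: Brackets of polynomials in $\lambda$ are computed coefficientwise. When $N$ is even the $f_n$ may additionally be constrained by $f_1+f_3+\cdots+f_{N-1}=f_2+f_4+\cdots+f_N$; the function $v=(f_1+\cdots+f_N)/2$ is a Casimir of this bracket. *)

theory Defs
  imports "HOL-Analysis.Analysis"
begin

text \<open>Functions of the coordinates: a point is x :: nat => real, with x k the value of f_k
 (only k in 1..N matter).  Partial derivative with respect to f_i.\<close>
definition pd :: "nat \<Rightarrow> ((nat \<Rightarrow> real) \<Rightarrow> real) \<Rightarrow> ((nat \<Rightarrow> real) \<Rightarrow> real)" where
  "pd i P = (\<lambda>x. deriv (\<lambda>t. P (x(i := t))) (x i))"

definition pbc :: "nat \<Rightarrow> nat \<Rightarrow> nat \<Rightarrow> real" where
  "pbc N m n = (if (m + 1) mod N = n mod N then -1 else 0)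
             + (if (n + 1) mod N = m mod N then 1 else 0)"

definition pbr :: "nat \<Rightarrow> ((nat \<Rightarrow> real) \<Rightarrow> real) \<Rightarrow> ((nat \<Rightarrow> real) \<Rightarrow> real)
                   \<Rightarrow> ((nat \<Rightarrow> real) \<Rightarrow> real)" where
  "pbr N P Q = (\<lambda>x. \<Sum>m\<in>{1..N}. \<Sum>n\<in>{1..N}. pbc N m n * pd m P x * pd n Q x)"

definition Dop :: "(nat \<Rightarrow> real) \<Rightarrow> real \<Rightarrow> nat \<Rightarrow> ((nat \<Rightarrow> real) \<Rightarrow> real)
                   \<Rightarrow> ((nat \<Rightarrow> real) \<Rightarrow> real)" where
  "Dop beta lam n P = (\<lambda>x. P x + (lam + beta n) * pd n (pd (n + 1) P) x)"

definition FF :: "nat \<Rightarrow> (nat \<Rightarrow> real) \<Rightarrow> nat \<Rightarrow> real \<Rightarrow> ((nat \<Rightarrow> real) \<Rightarrow> real)" where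
  "FF N beta m lam =
     (if m = N - 1 then (\<lambda>x. x (N - 1))
      else foldr (Dop beta lam) [m..<N - 1] (\<lambda>x. \<Prod>k\<in>{m..N - 1}. x k))"

end

theory Submission
  imports Defs
begin

text \<open>Expanding the product of operators shows that F_m obeys the three-term recurrence
  F_m = f_m F_(m+1) + (\<lambda> + \<beta>_m) F_(m+2), with F_N = 1 and F_(N+1) = 0.
  Since F_(m+1) and F_(m+2) only involve f_(m+1), ..., f_(N-1), the bracket with f_m acts on
  them as -\<partial>/\<partial>f_(m+1); hence {f_m, F_(m+1)} = -F_(m+2) and {f_m, F_(m+2)} = 0.
  Together with the Leibniz rule this turns the relations for the pair (F_(m+1), F_(m+2)) into
  those for (F_m, F_(m+1)), and all relations follow by downward induction on m, starting from
  the constants F_N and F_(N+1).\<close>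

text \<open>Since \<^const>\<open>pd\<close> is defined through \<^const>\<open>deriv\<close>, the product and sum rules
  only hold for differentiable functions; polynomials in the coordinates suffice here.\<close>

inductive coord_poly :: "((nat \<Rightarrow> real) \<Rightarrow> real) \<Rightarrow> bool" where
  coord_poly_const [simp]: "coord_poly (\<lambda>x. c)"
| coord_poly_coord [simp]: "coord_poly (\<lambda>x. x i)"
| coord_poly_add [simp]: "coord_poly P \<Longrightarrow> coord_poly Q \<Longrightarrow> coord_poly (\<lambda>x. P x + Q x)"
| coord_poly_mult [simp]: "coord_poly P \<Longrightarrow> coord_poly Q \<Longrightarrow> coord_poly (\<lambda>x. P x * Q x)"

lemma coord_poly_field_differentiable:
  "coord_poly P \<Longrightarrow> (\<lambda>s. P (x(i := s))) field_differentiable (at t)"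
proof (induction P rule: coord_poly.induct)
  case (coord_poly_coord j)
  show ?case by (cases "i = j") auto
qed (auto intro: field_differentiable_add field_differentiable_mult)

lemma pd_const [simp]: "pd i (\<lambda>x. c) = (\<lambda>x. 0)"
  by (simp add: pd_def)

lemma pd_coord: "pd i (\<lambda>x. x j) = (\<lambda>x. if i = j then 1 else 0)"
  by (auto simp: pd_def)

lemma pd_add:
  "coord_poly P \<Longrightarrow> coord_poly Q \<Longrightarrow> pd i (\<lambda>x. P x + Q x) = (\<lambda>x. pd i P x + pd i Q x)"
  unfolding pd_def by (intro ext deriv_add coord_poly_field_differentiable)

lemma pd_mult:
  "coord_poly P \<Longrightarrow> coord_poly Q \<Longrightarrow>
    pd i (\<lambda>x. P x * Q x) = (\<lambda>x. pd i P x * Q x + P x * pd i Q x)"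
  unfolding pd_def by (rule ext, subst deriv_mult) (auto intro: coord_poly_field_differentiable)

lemma coord_poly_pd: "coord_poly P \<Longrightarrow> coord_poly (pd i P)"
  by (induction P rule: coord_poly.induct) (simp_all add: pd_coord pd_add pd_mult)

definition independent_of :: "nat \<Rightarrow> ((nat \<Rightarrow> real) \<Rightarrow> real) \<Rightarrow> bool" where
  "independent_of i P \<longleftrightarrow> (\<forall>x t. P (x(i := t)) = P x)"

lemma pd_independent: "independent_of i P \<Longrightarrow> pd i P = (\<lambda>x. 0)"
  unfolding pd_def independent_of_def by simp

lemma pbc_antisym: "pbc N n m = - pbc N m n"
  unfolding pbc_def by simp

lemma pbr_antisym: "pbr N P Q x = - pbr N Q P x"
proof -
  have "pbr N P Q x = (\<Sum>n\<in>{1..N}. \<Sum>m\<in>{1..N}. pbc N m n * pd m P x * pd n Q x)"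
    unfolding pbr_def by (rule sum.swap)
  also have "\<dots> = - pbr N Q P x"
    unfolding pbr_def sum_negf[symmetric]
    by (intro sum.cong refl) (subst pbc_antisym, simp)
  finally show ?thesis .
qed

lemma pbr_self [simp]: "pbr N P P = (\<lambda>x. 0)"
  using pbr_antisym[of N P P] by auto

lemma pbr_const_left [simp]: "pbr N (\<lambda>x. c) Q = (\<lambda>x. 0)"
  unfolding pbr_def by simp

lemma pbr_const_right [simp]: "pbr N P (\<lambda>x. c) = (\<lambda>x. 0)"
  unfolding pbr_def by simp

lemma pbr_add_left:
  "coord_poly P \<Longrightarrow> coord_poly Q \<Longrightarrow>
    pbr N (\<lambda>x. P x + Q x) S = (\<lambda>x. pbr N P S x + pbr N Q S x)"
  unfolding pbr_def by (simp add: pd_add sum.distrib algebra_simps)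

lemma pbr_mult_left:
  "coord_poly P \<Longrightarrow> coord_poly Q \<Longrightarrow>
    pbr N (\<lambda>x. P x * Q x) S = (\<lambda>x. P x * pbr N Q S x + Q x * pbr N P S x)"
  unfolding pbr_def by (simp add: pd_mult sum.distrib sum_distrib_left algebra_simps)

lemma pbr_add_right:
  "coord_poly P \<Longrightarrow> coord_poly Q \<Longrightarrow>
    pbr N S (\<lambda>x. P x + Q x) = (\<lambda>x. pbr N S P x + pbr N S Q x)"
  unfolding pbr_def by (simp add: pd_add sum.distrib algebra_simps)

lemma pbr_mult_right:
  "coord_poly P \<Longrightarrow> coord_poly Q \<Longrightarrow>
    pbr N S (\<lambda>x. P x * Q x) = (\<lambda>x. P x * pbr N S Q x + Q x * pbr N S P x)"
  unfolding pbr_def by (simp add: pd_mult sum.distrib sum_distrib_left algebra_simps)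

lemma pbc_coord:
  assumes "1 \<le> j" "j < N" "n \<in> {1..N}"
  shows "pbc N j n = (if n = (if j = 1 then N else j - 1) then 1 else 0) - (if n = j + 1 then 1 else 0)"
proof -
  have small_mod: "a mod N = (if a = N then 0 else a)" if "1 \<le> a" "a \<le> N" for a
    using that by auto
  have "(N + 1) mod N = 1"
    using assms by (simp add: mod_Suc)
  then have "(n + 1) mod N = j mod N \<longleftrightarrow> n = (if j = 1 then N else j - 1)"
    using assms small_mod[of "n + 1"] by (cases "n = N") auto
  moreover have "(j + 1) mod N = n mod N \<longleftrightarrow> n = j + 1"
    using assms small_mod[of "j + 1"] small_mod[of n] by auto
  ultimately show ?thesis unfolding pbc_def by simp
qed

lemma pbr_coord_left:
  assumes "1 \<le> j" "j < N"
  shows "pbr N (\<lambda>x. x j) Q = (\<lambda>x. pd (if j = 1 then N else j - 1) Q x - pd (j + 1) Q x)"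
proof
  fix x
  define p where "p = (if j = 1 then N else j - 1)"
  have "pbr N (\<lambda>x. x j) Q x = (\<Sum>n\<in>{1..N}. pbc N j n * pd n Q x)"
  proof -
    have "(\<Sum>n\<in>{1..N}. pbc N m n * pd m (\<lambda>x. x j) x * pd n Q x)
        = (if m = j then \<Sum>n\<in>{1..N}. pbc N j n * pd n Q x else 0)" for m
      by (simp add: pd_coord)
    then show ?thesis using assms unfolding pbr_def by simp
  qed
  also have "\<dots> = (\<Sum>n\<in>{1..N}. (if n = p then pd n Q x else 0) - (if n = j + 1 then pd n Q x else 0))"
    using assms unfolding p_def by (intro sum.cong) (simp_all add: pbc_coord)
  also have "\<dots> = pd p Q x - pd (j + 1) Q x"
  proof -
    have "p \<in> {1..N}" "j + 1 \<in> {1..N}"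
      using assms by (auto simp: p_def)
    then show ?thesis by (simp add: sum_subtractf)
  qed
  finally show "pbr N (\<lambda>x. x j) Q x = pd p Q x - pd (j + 1) Q x"
    unfolding p_def .
qed

function continuant :: "nat \<Rightarrow> (nat \<Rightarrow> real) \<Rightarrow> real \<Rightarrow> nat \<Rightarrow> ((nat \<Rightarrow> real) \<Rightarrow> real)" where
  "continuant N beta lam m =
     (if N \<le> m then (\<lambda>x. if m = N then 1 else 0)
      else (\<lambda>x. x m * continuant N beta lam (Suc m) x
                + (lam + beta m) * continuant N beta lam (Suc (Suc m)) x))"
  by auto
termination by (relation "Wellfounded.measure (\<lambda>(N, beta, lam, m). N - m)") auto

declare continuant.simps [simp del]

lemma continuant_ge: "N \<le> m \<Longrightarrow> continuant N beta lam m = (\<lambda>x. if m = N then 1 else 0)"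
  by (simp add: continuant.simps)

lemma continuant_less:
  "m < N \<Longrightarrow> continuant N beta lam m =
    (\<lambda>x. x m * continuant N beta lam (Suc m) x + (lam + beta m) * continuant N beta lam (Suc (Suc m)) x)"
  by (subst continuant.simps) simp

lemma coord_poly_continuant [simp]: "coord_poly (continuant N beta lam m)"
proof (induction N beta lam m rule: continuant.induct)
  case (1 N beta lam m)
  then show ?case
    by (cases "N \<le> m") (simp_all add: continuant_ge continuant_less)
qed

lemma continuant_independent: "i < m \<or> N \<le> i \<Longrightarrow> independent_of i (continuant N beta lam m)"
proof (induction N beta lam m rule: continuant.induct)
  case (1 N beta lam m)
  then show ?case
    by (cases "N \<le> m") (auto simp: continuant_ge continuant_less independent_of_def)
qed

lemma pd_continuant: "pd m (continuant N beta lam m) = continuant N beta lam (Suc m)"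
proof (cases "N \<le> m")
  case True
  then show ?thesis by (simp add: continuant_ge)
next
  case False
  have "independent_of m (continuant N beta lam (Suc m))"
    and "independent_of m (continuant N beta lam (Suc (Suc m)))"
    by (simp_all add: continuant_independent)
  then show ?thesis
    using False by (subst continuant_less) (simp_all add: pd_add pd_mult pd_coord pd_independent)
qed

lemma pbr_coord_continuant:
  assumes "1 \<le> j" "j < k" "j < N"
  shows "pbr N (\<lambda>x. x j) (continuant N beta lam k) = (\<lambda>x. - pd (j + 1) (continuant N beta lam k) x)"
proof -
  have "independent_of (if j = 1 then N else j - 1) (continuant N beta lam k)"
    using assms by (intro continuant_independent) auto
  then show ?thesis
    using assms by (simp add: pbr_coord_left pd_independent)
qed

lemma pbr_continuant_left:
  "m < N \<Longrightarrow> pbr N (continuant N beta lam m) S =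
    (\<lambda>x. x m * pbr N (continuant N beta lam (Suc m)) S x
       + continuant N beta lam (Suc m) x * pbr N (\<lambda>x. x m) S x
       + (lam + beta m) * pbr N (continuant N beta lam (Suc (Suc m))) S x)"
  by (subst continuant_less) (simp_all add: pbr_add_left pbr_mult_left)

lemma pbr_continuant_right:
  "m < N \<Longrightarrow> pbr N S (continuant N beta mu m) =
    (\<lambda>x. x m * pbr N S (continuant N beta mu (Suc m)) x
       + continuant N beta mu (Suc m) x * pbr N S (\<lambda>x. x m) x
       + (mu + beta m) * pbr N S (continuant N beta mu (Suc (Suc m))) x)"
  by (subst continuant_less) (simp_all add: pbr_add_right pbr_mult_right)

definition continuants_commute :: "nat \<Rightarrow> (nat \<Rightarrow> real) \<Rightarrow> nat \<Rightarrow> bool" where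
  "continuants_commute N beta j \<longleftrightarrow>
    (\<forall>lam mu. pbr N (continuant N beta lam j) (continuant N beta mu j) = (\<lambda>x. 0))"

text \<open>Stated without division, so that it also holds for \<open>lam = mu\<close>.\<close>

definition continuants_exchange :: "nat \<Rightarrow> (nat \<Rightarrow> real) \<Rightarrow> nat \<Rightarrow> bool" where
  "continuants_exchange N beta j \<longleftrightarrow>
    (\<forall>lam mu x. (lam - mu) * pbr N (continuant N beta lam j) (continuant N beta mu (Suc j)) x
       = continuant N beta lam (Suc j) x * continuant N beta mu j x
         - continuant N beta lam j x * continuant N beta mu (Suc j) x)"

lemma continuants_exchange_step:
  assumes j: "1 \<le> j" "j < N"
    and commute: "continuants_commute N beta (Suc j)"
    and exchange: "continuants_exchange N beta (Suc j)"
  shows "continuants_exchange N beta j"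
  unfolding continuants_exchange_def
proof (intro allI)
  fix lam mu x
  let ?G = "continuant N beta"
  have swapped: "(lam - mu) * pbr N (?G lam (Suc (Suc j))) (?G mu (Suc j)) x
      = ?G mu (Suc (Suc j)) x * ?G lam (Suc j) x - ?G mu (Suc j) x * ?G lam (Suc (Suc j)) x"
    using exchange[unfolded continuants_exchange_def, rule_format, of mu lam x]
    by (subst pbr_antisym) (simp add: algebra_simps)
  have expand: "pbr N (?G lam j) (?G mu (Suc j)) x
      = - ?G lam (Suc j) x * ?G mu (Suc (Suc j)) x
        + (lam + beta j) * pbr N (?G lam (Suc (Suc j))) (?G mu (Suc j)) x"
    using j commute[unfolded continuants_commute_def, rule_format, of lam mu]
    by (simp add: pbr_continuant_left pbr_coord_continuant pd_continuant)
  have "(lam - mu) * pbr N (?G lam j) (?G mu (Suc j)) x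
      = - (lam - mu) * ?G lam (Suc j) x * ?G mu (Suc (Suc j)) x
        + (lam + beta j) * ((lam - mu) * pbr N (?G lam (Suc (Suc j))) (?G mu (Suc j)) x)"
    unfolding expand by (simp add: algebra_simps)
  also have "\<dots> = - (lam - mu) * ?G lam (Suc j) x * ?G mu (Suc (Suc j)) x
      + (lam + beta j) * (?G mu (Suc (Suc j)) x * ?G lam (Suc j) x
                          - ?G mu (Suc j) x * ?G lam (Suc (Suc j)) x)"
    unfolding swapped ..
  also have "\<dots> = ?G lam (Suc j) x * ?G mu j x - ?G lam j x * ?G mu (Suc j) x"
    using j by (simp add: continuant_less[of j] algebra_simps)
  finally show "(lam - mu) * pbr N (?G lam j) (?G mu (Suc j)) x
      = ?G lam (Suc j) x * ?G mu j x - ?G lam j x * ?G mu (Suc j) x" .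
qed

lemma continuants_commute_step:
  assumes j: "1 \<le> j" "j < N"
    and commute: "continuants_commute N beta (Suc (Suc j))"
    and exchange_Suc: "continuants_exchange N beta (Suc j)"
    and exchange: "continuants_exchange N beta j"
  shows "continuants_commute N beta j"
  unfolding continuants_commute_def
proof (intro allI)
  fix lam mu
  let ?G = "continuant N beta"
  show "pbr N (?G lam j) (?G mu j) = (\<lambda>x. 0)"
  proof (cases "lam = mu")
    case False
    show ?thesis
    proof
      fix x
      have A: "(lam - mu) * pbr N (?G lam (Suc j)) (?G mu j) x
          = ?G mu (Suc j) x * ?G lam j x - ?G mu j x * ?G lam (Suc j) x"
        using exchange[unfolded continuants_exchange_def, rule_format, of mu lam x]
        by (subst pbr_antisym) (simp add: algebra_simps)
      have B: "(lam - mu) * pbr N (?G lam (Suc (Suc j))) (?G mu (Suc j)) x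
          = ?G mu (Suc (Suc j)) x * ?G lam (Suc j) x - ?G mu (Suc j) x * ?G lam (Suc (Suc j)) x"
        using exchange_Suc[unfolded continuants_exchange_def, rule_format, of mu lam x]
        by (subst pbr_antisym) (simp add: algebra_simps)
      have "pbr N (\<lambda>x. x j) (?G l (Suc (Suc j))) = (\<lambda>x. 0)" for l
        using j by (simp add: pbr_coord_continuant pd_independent continuant_independent)
      then have X_far: "pbr N (?G lam (Suc (Suc j))) (\<lambda>x. x j) x = 0"
        and X: "pbr N (\<lambda>x. x j) (?G mu j) x = - x j * ?G mu (Suc (Suc j)) x"
        using j by (simp_all add: pbr_antisym[of N _ "\<lambda>x. x j"] pbr_continuant_right
            pbr_coord_continuant pd_continuant)
      have C: "pbr N (?G lam (Suc (Suc j))) (?G mu j) x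
          = x j * pbr N (?G lam (Suc (Suc j))) (?G mu (Suc j)) x"
        using j X_far commute[unfolded continuants_commute_def, rule_format, of lam mu]
        by (simp add: pbr_continuant_right)
      have "(lam - mu) * pbr N (?G lam j) (?G mu j) x
          = x j * ((lam - mu) * pbr N (?G lam (Suc j)) (?G mu j) x)
            + (lam - mu) * ?G lam (Suc j) x * pbr N (\<lambda>x. x j) (?G mu j) x
            + (lam + beta j) * x j * ((lam - mu) * pbr N (?G lam (Suc (Suc j))) (?G mu (Suc j)) x)"
        using j by (simp add: pbr_continuant_left C algebra_simps)
      also have "\<dots> = 0"
        unfolding A B X using j by (simp add: continuant_less[of j] algebra_simps)
      finally show "pbr N (?G lam j) (?G mu j) x = 0"
        using False by simp
    qed
  qed simp
qed

lemma continuant_brackets: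
  "1 \<le> j \<Longrightarrow> continuants_commute N beta j \<and> continuants_exchange N beta j"
proof (induction "N - j" arbitrary: j rule: less_induct)
  case less
  show ?case
  proof (cases "j < N")
    case True
    with less have "continuants_commute N beta (Suc j)" "continuants_exchange N beta (Suc j)"
      and "continuants_commute N beta (Suc (Suc j))"
      by auto
    with True less.prems show ?thesis
      using continuants_exchange_step continuants_commute_step by blast
  qed (simp add: continuants_commute_def continuants_exchange_def continuant_ge)
qed

lemma continuant_commute:
  "1 \<le> j \<Longrightarrow> pbr N (continuant N beta lam j) (continuant N beta mu j) = (\<lambda>x. 0)"
  using continuant_brackets continuants_commute_def by blast

lemma continuant_exchange:
  "1 \<le> j \<Longrightarrow> (lam - mu) * pbr N (continuant N beta lam j) (continuant N beta mu (Suc j)) x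
     = continuant N beta lam (Suc j) x * continuant N beta mu j x
       - continuant N beta lam j x * continuant N beta mu (Suc j) x"
  using continuant_brackets continuants_exchange_def by blast

lemma coord_poly_Dop: "coord_poly P \<Longrightarrow> coord_poly (Dop beta lam n P)"
  unfolding Dop_def by (simp add: coord_poly_pd)

lemma Dop_mult_coord:
  assumes "coord_poly Q" "m \<noteq> j" "m \<noteq> j + 1"
  shows "Dop beta lam j (\<lambda>x. x m * Q x) = (\<lambda>x. x m * Dop beta lam j Q x)"
  using assms unfolding Dop_def
  by (simp add: pd_mult pd_coord coord_poly_pd algebra_simps)

lemma foldr_Dop_mult_coord:
  assumes "coord_poly Q" "\<forall>j\<in>set js. m < j"
  shows "foldr (Dop beta lam) js (\<lambda>x. x m * Q x) = (\<lambda>x. x m * foldr (Dop beta lam) js Q x)"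
  using assms(2)
proof (induction js)
  case (Cons j js)
  have "coord_poly (foldr (Dop beta lam) js Q)"
    using assms(1) by (induction js) (simp_all add: coord_poly_Dop)
  with Cons show ?case by (simp add: Dop_mult_coord)
qed simp

lemma Dop_coord_mult_continuant:
  assumes "m < N"
  shows "Dop beta lam m (\<lambda>x. x m * continuant N beta lam (Suc m) x) = continuant N beta lam m"
proof -
  have "independent_of m (continuant N beta lam (Suc (Suc m)))"
    by (simp add: continuant_independent)
  then have "pd m (pd (Suc m) (\<lambda>x. x m * continuant N beta lam (Suc m) x))
      = continuant N beta lam (Suc (Suc m))"
    by (simp add: pd_mult pd_coord pd_continuant pd_independent coord_poly_pd)
  then show ?thesis
    using assms unfolding Dop_def by (subst (2) continuant_less) simp_all
qed

lemma FF_eq_continuant: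
  assumes "1 \<le> N" "m \<le> N - 1"
  shows "FF N beta m lam = continuant N beta lam m"
proof -
  have "foldr (Dop beta lam) [m..<N - 1] (\<lambda>x. \<Prod>k\<in>{m..N - 1}. x k) = continuant N beta lam m"
    using assms(2)
  proof (induction m rule: inc_induct)
    case base
    then show ?case
      using assms(1) by (subst continuant_less) (auto simp: continuant_ge)
  next
    case (step m)
    have split: "[m..<N - 1] = m # [Suc m..<N - 1]"
      "(\<lambda>x. \<Prod>k\<in>{m..N - 1}. x k) = (\<lambda>x. x m * (\<Prod>k\<in>{Suc m..N - 1}. x k))"
      using step.hyps by (simp_all add: upt_conv_Cons prod.atLeast_Suc_atMost)
    have "coord_poly (\<lambda>x. \<Prod>k\<in>{Suc m..N - 1}. x k)"
      by (induction rule: infinite_finite_induct) simp_all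
    then have "foldr (Dop beta lam) [Suc m..<N - 1] (\<lambda>x. x m * (\<Prod>k\<in>{Suc m..N - 1}. x k))
        = (\<lambda>x. x m * continuant N beta lam (Suc m) x)"
      using step.IH by (simp add: foldr_Dop_mult_coord)
    then have "foldr (Dop beta lam) [m..<N - 1] (\<lambda>x. \<Prod>k\<in>{m..N - 1}. x k)
        = Dop beta lam m (\<lambda>x. x m * continuant N beta lam (Suc m) x)"
      unfolding split by simp
    also have "\<dots> = continuant N beta lam m"
      using step.hyps by (simp add: Dop_coord_mult_continuant)
    finally show ?case .
  qed
  then show ?thesis
    unfolding FF_def by auto
qed

lemma FF_commute:
  "1 \<le> m \<Longrightarrow> m \<le> N - 1 \<Longrightarrow> pbr N (FF N beta m lam) (FF N beta m mu) = (\<lambda>x. 0)"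
  by (simp add: FF_eq_continuant continuant_commute)

lemma FF_exchange:
  assumes "1 \<le> m" "m < N - 1" "lam \<noteq> mu"
  shows "pbr N (FF N beta m lam) (FF N beta (Suc m) mu) =
    (\<lambda>x. (FF N beta (Suc m) lam x * FF N beta m mu x - FF N beta m lam x * FF N beta (Suc m) mu x)
          / (lam - mu))"
proof
  fix x
  from assms continuant_exchange[of m lam mu N beta x]
  show "pbr N (FF N beta m lam) (FF N beta (Suc m) mu) x =
      (FF N beta (Suc m) lam x * FF N beta m mu x - FF N beta m lam x * FF N beta (Suc m) mu x)
        / (lam - mu)"
    by (simp add: FF_eq_continuant field_simps)
qed

theorem mainTheorem8:
  fixes N :: nat and beta :: "nat \<Rightarrow> real" and lam mu :: real
  assumes "N \<ge> 3" and "lam \<noteq> mu"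
  shows "(\<forall>n < N - 2.
            pbr N (FF N beta (n + 1) lam) (FF N beta (n + 1) mu) = (\<lambda>x. 0)
          \<and> pbr N (FF N beta (n + 2) lam) (FF N beta (n + 2) mu) = (\<lambda>x. 0)
          \<and> pbr N (FF N beta (n + 1) lam) (FF N beta (n + 2) mu) =
              (\<lambda>x. (FF N beta (n + 2) lam x * FF N beta (n + 1) mu x
                    - FF N beta (n + 1) lam x * FF N beta (n + 2) mu x) / (lam - mu)))
       \<and> pbr N (FF N beta 2 lam) (FF N beta 2 mu) = (\<lambda>x. 0)
       \<and> pbr N (FF N beta 1 lam) (FF N beta 1 mu) = (\<lambda>x. 0)
       \<and> pbr N (FF N beta 2 lam) (FF N beta 1 mu) =
              (\<lambda>x. (FF N beta 1 lam x * FF N beta 2 mu x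
                    - FF N beta 2 lam x * FF N beta 1 mu x) / (lam - mu))"
proof -
  have "pbr N (FF N beta 2 lam) (FF N beta 1 mu) =
      (\<lambda>x. (FF N beta 1 lam x * FF N beta 2 mu x - FF N beta 2 lam x * FF N beta 1 mu x) / (lam - mu))"
  proof
    fix x
    have "pbr N (FF N beta 1 mu) (FF N beta 2 lam) x =
        (FF N beta 2 mu x * FF N beta 1 lam x - FF N beta 1 mu x * FF N beta 2 lam x) / (mu - lam)"
      using assms FF_exchange[of 1 N mu lam beta] by (simp add: numeral_2_eq_2)
    then show "pbr N (FF N beta 2 lam) (FF N beta 1 mu) x =
        (FF N beta 1 lam x * FF N beta 2 mu x - FF N beta 2 lam x * FF N beta 1 mu x) / (lam - mu)"
      using assms by (subst pbr_antisym) (simp add: field_simps)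
  qed
  with assms show ?thesis
    by (simp add: FF_commute FF_exchange)
qed

end
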